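(* Let $A$ be a real $d\times d$ matrix and $\Sigma$ a real symmetric positive definite $d\times d$ matrix such that $V:=\Sigma-A\Sigma A^T$ is positive definite and $A\Sigma=\Sigma A^T$. Consider the Markov chain $\mathbf{X}_t=A\mathbf{X}_{t-1}+\boldsymbol{\xi}_t$ on $\mathbb{R}^d$ with $\boldsymbol{\xi}_t$ i.i.d. $\mathcal{N}(\mathbf{0},V)$, whose stationary distribution is $\mathcal{N}(\mathbf{0},\Sigma)$. Write the symmetric matrix $\Sigma^{-1/2}A\Sigma^{1/2}=PDP^T$ with $P^TP=I$ and $D=\operatorname{diag}(\lambda_1,\dots,\lambda_d)$ (the eigenvalues of $A$). Then the chi-square distance after $l$ steps, starting from $\mathbf{x}\in\mathbb{R}^d$, is $$\chi_{\mathbf{x}}^2(l)=\frac{e^{\sum_{i=1}^dz_i^2\lambda_i^{2l}/(1+\lambda_i^{2l})}}{\sqrt{\prod_{i=1}^d(1-\lambda_i^{4l})}}-1,\qquad\text{where }\mathbf{z}=P^T\Sigma^{-1/2}\mathbf{x}.$$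
   Context: $\Sigma^{1/2}$ is the symmetric positive definite square root. The chi-square distance is $\chi_{\mathbf{x}}^2(l)=\int_{\mathbb{R}^d}\frac{[K^l(\mathbf{x},\mathbf{y})-\pi(\mathbf{y})]^2}{\pi(\mathbf{y})}d\mathbf{y}$, where $K^l(\mathbf{x},\cdot)$ is the $l$-step transition density of the chain and $\pi$ the $\mathcal{N}(\mathbf{0},\Sigma)$ density. *)

theory Defs
  imports "HOL-Analysis.Analysis"
begin

definition posdef :: "real^'n^'n \<Rightarrow> bool" where
  "posdef M \<longleftrightarrow> transpose M = M \<and> (\<forall>x. x \<noteq> 0 \<longrightarrow> x \<bullet> (M *v x) > 0)"

definition spd_sqrt :: "real^'n^'n \<Rightarrow> real^'n^'n" where
  "spd_sqrt S = (THE R. posdef R \<and> R ** R = S)"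

definition diag_mat :: "('n \<Rightarrow> real) \<Rightarrow> real^'n^'n" where
  "diag_mat l = (\<chi> i j. if i = j then l i else 0)"

definition gauss_density :: "real^'n^'n \<Rightarrow> real^'n \<Rightarrow> real^'n \<Rightarrow> real" where
  "gauss_density S m y =
     exp (-(1/2) * ((y - m) \<bullet> (matrix_inv S *v (y - m)))) / sqrt ((2 * pi) ^ CARD('n) * det S)"

text \<open>l-step transition density K^l(x,y) of the chain X_t = A X_(t-1) + xi_t, xi_t ~ N(0,V),
  via Chapman-Kolmogorov. Only l >= 1 is meaningful (K^0 has no density); value 0 at l = 0 is
  an unused convention.\<close>
fun trans_dens :: "real^'n^'n \<Rightarrow> real^'n^'n \<Rightarrow> nat \<Rightarrow> real^'n \<Rightarrow> real^'n \<Rightarrow> real" where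
  "trans_dens A V 0 x y = 0"
| "trans_dens A V (Suc 0) x y = gauss_density V (A *v x) y"
| "trans_dens A V (Suc (Suc l)) x y =
     (LINT z|lborel. trans_dens A V (Suc l) x z * gauss_density V (A *v z) y)"

text \<open>Chi-square distance (as an extended nonnegative real, the integrand being nonnegative).\<close>
definition chi_sq :: "real^'n^'n \<Rightarrow> real^'n^'n \<Rightarrow> real^'n^'n \<Rightarrow> real^'n \<Rightarrow> nat \<Rightarrow> ennreal" where
  "chi_sq A V S x l =
     (\<integral>\<^sup>+ y. ennreal ((trans_dens A V l x y - gauss_density S 0 y)^2 / gauss_density S 0 y) \<partial>lborel)"

end

theory Submission
  imports Defs "HOL-Probability.Probability"
begin

text \<open>In the coordinates \<open>z = P\<^sup>T \<Sigma>\<^sup>-\<^sup>1\<^sup>/\<^sup>2 x\<close> the matrix \<open>A\<close> acts as \<open>diag(\<lambda>)\<close>, the stationary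
  covariance \<open>\<Sigma>\<close> becomes the identity and the innovation covariance \<open>V = \<Sigma> - A \<Sigma> A\<^sup>T\<close> becomes
  \<open>diag(1 - \<lambda>\<^sub>i\<^sup>2)\<close>, so positive definiteness of \<open>V\<close> gives \<open>|\<lambda>\<^sub>i| < 1\<close>. The chain thus splits into
  \<open>d\<close> independent scalar AR(1) chains, and by Gaussian convolution the \<open>l\<close>-step kernel is the
  product of the densities \<open>N(\<lambda>\<^sub>i\<^sup>l z\<^sub>i, 1 - \<lambda>\<^sub>i\<^sup>2\<^sup>l)\<close> (up to the Jacobian of the
  coordinate change). Since kernel and stationary density both integrate to 1,
  \<open>\<chi>\<^sup>2 = \<integral> K\<^sup>2/\<pi> - 1\<close>, and \<open>\<integral> K\<^sup>2/\<pi>\<close> factors into the one-dimensional integrals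
  \<open>\<integral> N(a,s)\<^sup>2/N(0,1) = exp(a\<^sup>2/(2-s)) / \<surd>(s(2-s))\<close>, which with \<open>a = \<lambda>\<^sub>i\<^sup>l z\<^sub>i\<close> and
  \<open>s = 1 - \<lambda>\<^sub>i\<^sup>2\<^sup>l\<close> give the stated formula.\<close>

section \<open>Diagonal matrices and the spectral theorem\<close>

lemma diag_mat_mult_diag_mat: "diag_mat a ** diag_mat b = diag_mat (\<lambda>i. a i * b i)"
  unfolding diag_mat_def matrix_matrix_mult_def
  by (simp add: vec_eq_iff if_distrib[of "\<lambda>x. x * _"] cong: if_cong)

lemma diag_mat_mult_vec: "diag_mat a *v x = (\<chi> i. a i * x $ i)"
  unfolding diag_mat_def matrix_vector_mult_def
  by (simp add: vec_eq_iff if_distrib[of "\<lambda>x. x * _"] cong: if_cong)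

lemma transpose_diag_mat [simp]: "transpose (diag_mat a) = diag_mat a"
  unfolding diag_mat_def transpose_def by (simp add: vec_eq_iff)

lemma det_diag_mat: "det (diag_mat a) = prod a UNIV"
  by (subst det_diagonal) (auto simp: diag_mat_def)

lemma diag_mat_1: "diag_mat (\<lambda>_. 1) = mat 1"
  unfolding diag_mat_def mat_def by (simp add: vec_eq_iff)

lemma inner_diag_mat: "y \<bullet> (diag_mat a *v y) = (\<Sum>i\<in>UNIV. a i * (y $ i)\<^sup>2)"
  by (simp add: diag_mat_mult_vec inner_vec_def power2_eq_square mult.assoc mult.left_commute)

lemma inner_matrix_vector_transpose: "x \<bullet> (A *v y) = (transpose A *v x) \<bullet> (y :: real^'n)"
  by (metis dot_lmul_matrix vector_transpose_matrix transpose_transpose)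

lemma inner_conj_matrix:
  fixes Q D :: "real^'n^'n"
  shows "x \<bullet> ((Q ** D ** transpose Q) *v x) = (transpose Q *v x) \<bullet> (D *v (transpose Q *v x))"
  by (simp add: inner_matrix_vector_transpose matrix_vector_mul_assoc[symmetric])

lemma matrix_vector_mul_cancel: "A ** B = mat 1 \<Longrightarrow> A *v (B *v x) = (x :: real^'n)"
  by (metis matrix_vector_mul_assoc matrix_vector_mul_lid)

lemma inner_diag_mat_axis:
  "axis i 1 \<bullet> (diag_mat a *v axis i (1::real)) = a i"
proof -
  have "a k * (axis i (1::real) $ k)\<^sup>2 = (if k = i then a i else 0)" for k
    by (simp add: axis_def)
  then show ?thesis by (simp add: inner_diag_mat)
qed

text \<open>First-order condition at a maximiser \<open>v\<close> of the Rayleigh quotient: for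
  \<open>w = M v - (v \<bullet> M v) v \<in> W\<close>, comparing \<open>v + t w\<close> with \<open>v\<close> gives \<open>2 t |w|\<^sup>2 \<le> C t\<^sup>2\<close> for all \<open>t\<close>,
  hence \<open>w = 0\<close>.\<close>
lemma rayleigh_maximiser_eigenvector:
  fixes M :: "real^'n^'n"
  assumes sym: "transpose M = M" and W: "subspace W" and inv: "\<And>x. x \<in> W \<Longrightarrow> M *v x \<in> W"
    and vW: "v \<in> W" and vv: "v \<bullet> v = 1"
    and bound: "\<And>x. x \<in> W \<Longrightarrow> x \<bullet> (M *v x) \<le> (v \<bullet> (M *v v)) * (x \<bullet> x)"
  shows "M *v v = (v \<bullet> (M *v v)) *\<^sub>R v"
proof -
  let ?f = "\<lambda>x. x \<bullet> (M *v x)"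
  define l where "l = ?f v"
  define w where "w = M *v v - l *\<^sub>R v"
  have wW: "w \<in> W" unfolding w_def using inv[OF vW] vW W
    by (simp add: subspace_diff subspace_scale)
  have vw: "v \<bullet> w = 0" unfolding w_def l_def using vv
    by (simp add: inner_diff_right)
  have wMv: "w \<bullet> (M *v v) = w \<bullet> w"
  proof -
    have "M *v v = w + l *\<^sub>R v" unfolding w_def by simp
    then have "w \<bullet> (M *v v) = w \<bullet> w + l * (w \<bullet> v)" by (simp add: inner_add_right)
    then show ?thesis using vw by (simp add: inner_commute)
  qed
  have vMw: "v \<bullet> (M *v w) = w \<bullet> w"
    using wMv inner_matrix_vector_transpose[of v M w] sym by (simp add: inner_commute)
  define a where "a = w \<bullet> w"
  define K where "K = l * a - ?f w"
  have key: "2 * t * a \<le> t\<^sup>2 * K" for t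
  proof -
    have "v + t *\<^sub>R w \<in> W" using vW wW W by (simp add: subspace_add subspace_scale)
    then have b: "?f (v + t *\<^sub>R w) \<le> l * ((v + t *\<^sub>R w) \<bullet> (v + t *\<^sub>R w))"
      unfolding l_def by (rule bound)
    have e1: "?f (v + t *\<^sub>R w) = l + 2 * t * a + t\<^sup>2 * ?f w"
      by (simp add: matrix_vector_right_distrib matrix_vector_mult_scaleR inner_add_left
          inner_add_right l_def a_def wMv vMw power2_eq_square algebra_simps)
    have e2: "(v + t *\<^sub>R w) \<bullet> (v + t *\<^sub>R w) = 1 + t\<^sup>2 * a"
      using vv vw by (simp add: inner_add_left inner_add_right a_def power2_eq_square
          inner_commute algebra_simps)
    show ?thesis using b unfolding e1 e2 K_def by (simp add: algebra_simps)
  qed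
  have "a = 0"
  proof (rule ccontr)
    assume "a \<noteq> 0"
    then have apos: "a > 0" unfolding a_def by simp
    define t where "t = a / (\<bar>K\<bar> + 1)"
    have tpos: "t > 0" using apos by (simp add: t_def add_pos_nonneg)
    have "2 * a \<le> t * K" using key[of t] tpos by (simp add: power2_eq_square)
    also have "t * K \<le> t * \<bar>K\<bar>" using tpos by (simp add: mult_left_mono)
    also have "t * \<bar>K\<bar> < a" using apos unfolding t_def by (simp add: field_simps)
    finally show False using apos by simp
  qed
  then show ?thesis unfolding a_def w_def l_def by simp
qed

lemma symmetric_matrix_unit_eigenvector:
  fixes M :: "real^'n^'n"
  assumes sym: "transpose M = M" and W: "subspace W" and x0: "x0 \<in> W" "x0 \<noteq> 0"
    and inv: "\<And>x. x \<in> W \<Longrightarrow> M *v x \<in> W"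
  shows "\<exists>v\<in>W. norm v = 1 \<and> M *v v = (v \<bullet> (M *v v)) *\<^sub>R v"
proof -
  let ?S = "W \<inter> sphere 0 1"
  let ?f = "\<lambda>x. x \<bullet> (M *v x)"
  have cS: "compact ?S"
    by (intro closed_Int_compact closed_subspace W compact_sphere)
  have "(1 / norm x0) *\<^sub>R x0 \<in> ?S"
    using x0 W by (simp add: subspace_scale)
  then have neS: "?S \<noteq> {}" by blast
  have "continuous_on UNIV (\<lambda>x. M *v x)"
    by (simp add: linear_continuous_on linear_linear matrix_vector_mul_linear)
  then have "continuous_on UNIV ?f" by (intro continuous_on_inner continuous_on_id)
  then have ctS: "continuous_on ?S ?f" by (rule continuous_on_subset) simp
  obtain v where v: "v \<in> ?S" and vmax: "\<And>y. y \<in> ?S \<Longrightarrow> ?f y \<le> ?f v"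
    using continuous_attains_sup[OF cS neS ctS] by blast
  have nv: "norm v = 1" and vW: "v \<in> W" using v by auto
  have vv: "v \<bullet> v = 1" using nv by (simp add: dot_square_norm)
  have bound: "?f x \<le> ?f v * (x \<bullet> x)" if xW: "x \<in> W" for x
  proof (cases "x = 0")
    case False
    have "(1 / norm x) *\<^sub>R x \<in> ?S" using xW False W by (simp add: subspace_scale)
    then have "?f ((1 / norm x) *\<^sub>R x) \<le> ?f v" using vmax by blast
    moreover have "?f ((1 / norm x) *\<^sub>R x) = (1 / norm x)\<^sup>2 * ?f x"
      by (simp add: matrix_vector_mult_scaleR power2_eq_square)
    ultimately have "(1 / norm x)\<^sup>2 * ?f x \<le> ?f v" by simp
    moreover have "x \<bullet> x = (norm x)\<^sup>2" by (simp add: dot_square_norm)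
    ultimately show ?thesis using False by (simp add: field_simps power2_eq_square)
  qed simp
  show ?thesis
    using rayleigh_maximiser_eigenvector[OF sym W inv vW vv bound] vW nv by blast
qed

lemma symmetric_matrix_orthonormal_eigenvectors:
  fixes M :: "real^'n^'n"
  assumes sym: "transpose M = M" and "k \<le> CARD('n)"
  shows "\<exists>B. finite B \<and> card B = k \<and> pairwise orthogonal B \<and>
            (\<forall>b\<in>B. norm b = 1 \<and> (\<exists>c. M *v b = c *\<^sub>R b))"
  using assms(2)
proof (induction k)
  case 0
  show ?case by (rule exI[of _ "{}"]) simp
next
  case (Suc k)
  then obtain B where B: "finite B" "card B = k" "pairwise orthogonal B"
    "\<forall>b\<in>B. norm b = 1 \<and> (\<exists>c. M *v b = c *\<^sub>R b)" by auto
  have "dim B \<le> card B" using B(1) by (rule dim_le_card')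
  also have "\<dots> < DIM(real^'n)" using B(2) Suc.prems by simp
  finally obtain x where x: "x \<noteq> 0" "\<And>y. y \<in> span B \<Longrightarrow> orthogonal x y"
    using orthogonal_to_subspace_exists by metis
  define W where "W = {y::real^'n. \<forall>b\<in>B. b \<bullet> y = 0}"
  have sW: "subspace W" unfolding W_def subspace_def
    by (simp add: inner_add_right)
  have xW: "x \<in> W" unfolding W_def using x(2) span_base
    by (force simp: orthogonal_def inner_commute)
  have invW: "M *v y \<in> W" if "y \<in> W" for y
  proof -
    have "b \<bullet> (M *v y) = 0" if bB: "b \<in> B" for b
    proof -
      obtain c where c: "M *v b = c *\<^sub>R b" using B(4) bB by blast
      have "b \<bullet> (M *v y) = c * (b \<bullet> y)"
        using inner_matrix_vector_transpose[of b M y] sym c by simp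
      then show ?thesis using \<open>y \<in> W\<close> bB unfolding W_def by simp
    qed
    then show ?thesis unfolding W_def by simp
  qed
  obtain v where v: "v \<in> W" "norm v = 1" "M *v v = (v \<bullet> (M *v v)) *\<^sub>R v"
    using symmetric_matrix_unit_eigenvector[OF sym sW xW x(1) invW] by blast
  have vB: "v \<notin> B"
  proof
    assume "v \<in> B"
    then have "v \<bullet> v = 0" using v(1) unfolding W_def by simp
    then show False using v(2) by simp
  qed
  show ?case
  proof (rule exI[of _ "insert v B"], intro conjI)
    show "finite (insert v B)" "card (insert v B) = Suc k" using B(1,2) vB by simp_all
    show "pairwise orthogonal (insert v B)"
      using B(3) v(1) unfolding W_def pairwise_insert
      by (auto simp: orthogonal_def inner_commute)
    show "\<forall>b\<in>insert v B. norm b = 1 \<and> (\<exists>c. M *v b = c *\<^sub>R b)"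
      using B(4) v by blast
  qed
qed

lemma symmetric_matrix_diagonalization:
  fixes M :: "real^'n^'n"
  assumes sym: "transpose M = M"
  obtains Q :: "real^'n^'n" and mu where "orthogonal_matrix Q" "M = Q ** diag_mat mu ** transpose Q"
proof -
  obtain B where B: "finite B" "card B = CARD('n)" "pairwise orthogonal B"
    "\<forall>b\<in>B. norm b = 1 \<and> (\<exists>c. M *v b = c *\<^sub>R b)"
    using symmetric_matrix_orthonormal_eigenvectors[OF sym, of "CARD('n)"] by auto
  obtain e where e: "bij_betw e (UNIV::'n set) B"
    using finite_same_card_bij[of "UNIV::'n set" B] B(1,2) by auto
  have eB: "e i \<in> B" for i using e by (auto simp: bij_betw_def)
  have einj: "e i = e j \<Longrightarrow> i = j" for i j using e by (auto simp: bij_betw_def inj_def)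
  define mu where "mu i = (SOME c. M *v e i = c *\<^sub>R e i)" for i
  have mu: "M *v e i = mu i *\<^sub>R e i" for i
    unfolding mu_def using B(4) eB[of i] by (metis (mono_tags, lifting) someI_ex)
  define Q :: "real^'n^'n" where "Q = (\<chi> i j. e j $ i)"
  have colQ: "column j Q = e j" for j unfolding Q_def column_def by (simp add: vec_eq_iff)
  have oQ: "orthogonal_matrix Q"
    unfolding orthogonal_matrix_orthonormal_columns colQ
  proof (intro conjI allI impI)
    show "norm (e i) = 1" for i using B(4) eB by blast
    show "orthogonal (e i) (e j)" if "i \<noteq> j" for i j
      using that einj B(3) eB unfolding pairwise_def by blast
  qed
  have "(M ** Q) $ i $ j = (Q ** diag_mat mu) $ i $ j" for i j
  proof -
    have "(M ** Q) $ i $ j = (M *v e j) $ i"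
      unfolding matrix_matrix_mult_def matrix_vector_mult_def Q_def by simp
    also have "\<dots> = (Q ** diag_mat mu) $ i $ j"
      unfolding mu matrix_matrix_mult_def diag_mat_def Q_def
      by (simp add: if_distrib cong: if_cong)
    finally show ?thesis .
  qed
  then have MQ: "M ** Q = Q ** diag_mat mu" by (simp add: vec_eq_iff)
  have "M = M ** (Q ** transpose Q)" using oQ unfolding orthogonal_matrix_def by simp
  also have "\<dots> = Q ** diag_mat mu ** transpose Q" by (simp add: matrix_mul_assoc MQ)
  finally show ?thesis using that oQ by blast
qed

section \<open>Positive definite matrices and their square roots\<close>

lemma matrix_inv_eqI:
  fixes A B :: "real^'n^'n"
  assumes "A ** B = mat 1" shows "matrix_inv A = B"
proof -
  have "B ** A = mat 1" using assms matrix_left_right_inverse by blast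
  then have "\<exists>A'. A ** A' = mat 1 \<and> A' ** A = mat 1" using assms by blast
  then have "matrix_inv A ** A = mat 1"
    unfolding matrix_inv_def by (rule someI2_ex) blast
  then show ?thesis using assms by (metis matrix_mul_assoc matrix_mul_lid matrix_mul_rid)
qed

lemma posdef_invertible:
  fixes R :: "real^'n^'n"
  assumes "posdef R" shows "invertible R"
proof -
  have "x = 0" if "R *v x = 0" for x
  proof (rule ccontr)
    assume "x \<noteq> 0"
    then have "x \<bullet> (R *v x) > 0" using assms unfolding posdef_def by blast
    then show False using that by simp
  qed
  then show ?thesis unfolding invertible_left_inverse matrix_left_invertible_ker by blast
qed

lemma posdef_matrix_inv:
  fixes R :: "real^'n^'n"
  assumes "posdef R" shows "R ** matrix_inv R = mat 1" "matrix_inv R ** R = mat 1"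
proof -
  have "\<exists>A'. R ** A' = mat 1 \<and> A' ** R = mat 1"
    using posdef_invertible[OF assms] unfolding invertible_def .
  then have "R ** matrix_inv R = mat 1 \<and> matrix_inv R ** R = mat 1"
    unfolding matrix_inv_def by (rule someI_ex)
  then show "R ** matrix_inv R = mat 1" "matrix_inv R ** R = mat 1" by auto
qed

lemma posdef_diagonalization_pos:
  fixes Q :: "real^'n^'n"
  assumes pd: "posdef M" and oQ: "orthogonal_matrix Q" and M: "M = Q ** diag_mat mu ** transpose Q"
  shows "mu i > 0"
proof -
  define x where "x = Q *v axis i 1"
  have tx: "transpose Q *v x = axis i 1" unfolding x_def
    using oQ by (simp add: matrix_vector_mul_assoc orthogonal_matrix_def)
  then have "x \<noteq> 0" by (auto simp: axis_eq_0_iff)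
  then have "x \<bullet> (M *v x) > 0" using pd unfolding posdef_def by blast
  then show ?thesis unfolding M inner_conj_matrix tx inner_diag_mat_axis .
qed

lemma posdef_conj_diag_mat:
  fixes Q :: "real^'n^'n"
  assumes oQ: "orthogonal_matrix Q" and pos: "\<And>i. mu i > 0"
  shows "posdef (Q ** diag_mat mu ** transpose Q)"
  unfolding posdef_def
proof (intro conjI allI impI)
  show "transpose (Q ** diag_mat mu ** transpose Q) = Q ** diag_mat mu ** transpose Q"
    by (simp add: matrix_transpose_mul matrix_mul_assoc)
  fix x :: "real^'n" assume "x \<noteq> 0"
  define y where "y = transpose Q *v x"
  have "Q *v y = x" unfolding y_def
    using oQ matrix_vector_mul_cancel unfolding orthogonal_matrix_def by blast
  then have "y \<noteq> 0" using \<open>x \<noteq> 0\<close> by auto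
  then obtain j where "y $ j \<noteq> 0" by (auto simp: vec_eq_iff)
  then have "0 < (\<Sum>i\<in>UNIV. mu i * (y $ i)\<^sup>2)"
    by (intro sum_pos2[of _ j]) (auto intro!: mult_pos_pos mult_nonneg_nonneg less_imp_le[OF pos] pos)
  then show "0 < x \<bullet> ((Q ** diag_mat mu ** transpose Q) *v x)"
    unfolding inner_conj_matrix y_def[symmetric] inner_diag_mat .
qed

text \<open>Both roots act on the eigenvectors of \<open>R\<close> in the same way: if \<open>R v = \<nu> v\<close>, then
  \<open>z = R\<^sub>0 v - \<nu> v\<close> satisfies \<open>R\<^sub>0 z + \<nu> z = (R\<^sub>0\<^sup>2 - \<nu>\<^sup>2) v = 0\<close>, which positivity of
  \<open>R\<^sub>0\<close> and \<open>\<nu>\<close> forbids unless \<open>z = 0\<close>.\<close>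
lemma posdef_sqrt_unique:
  fixes R R0 :: "real^'n^'n"
  assumes pR: "posdef R" and pR0: "posdef R0" and eq: "R ** R = R0 ** R0"
  shows "R = R0"
proof -
  obtain Q nu where oQ: "orthogonal_matrix Q" and RQ: "R = Q ** diag_mat nu ** transpose Q"
    using symmetric_matrix_diagonalization pR unfolding posdef_def by blast
  have nupos: "nu j > 0" for j using posdef_diagonalization_pos[OF pR oQ RQ] .
  have QtQ: "transpose Q ** Q = mat 1" using oQ unfolding orthogonal_matrix_def by simp
  have RQQ: "R ** Q = Q ** diag_mat nu"
    by (simp add: RQ matrix_mul_assoc[symmetric] QtQ)
  have col: "R *v column j Q = nu j *\<^sub>R column j Q" for j
  proof -
    have "R *v column j Q = column j (R ** Q)"
      by (simp add: vec_eq_iff matrix_matrix_mult_def matrix_vector_mult_def column_def)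
    then show ?thesis unfolding RQQ
      by (simp add: vec_eq_iff column_def matrix_matrix_mult_def diag_mat_def if_distrib cong: if_cong)
  qed
  have col0: "R0 *v column j Q = nu j *\<^sub>R column j Q" for j
  proof -
    let ?v = "column j Q"
    define z where "z = R0 *v ?v - nu j *\<^sub>R ?v"
    have "R0 *v z + nu j *\<^sub>R z = (R0 ** R0) *v ?v - (nu j)\<^sup>2 *\<^sub>R ?v"
      unfolding z_def
      by (simp add: matrix_vector_mult_diff_distrib matrix_vector_mult_scaleR matrix_vector_mul_assoc
          power2_eq_square algebra_simps)
    also have "(R0 ** R0) *v ?v = (nu j)\<^sup>2 *\<^sub>R ?v"
      by (simp add: eq[symmetric] matrix_vector_mul_assoc[symmetric] col
          matrix_vector_mult_scaleR power2_eq_square)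
    finally have "R0 *v z + nu j *\<^sub>R z = 0" by simp
    from arg_cong[OF this, of "\<lambda>u. z \<bullet> u"]
    have zz: "z \<bullet> (R0 *v z) + nu j * (z \<bullet> z) = 0" by (simp add: inner_add_right)
    have "z = 0"
    proof (rule ccontr)
      assume "z \<noteq> 0"
      then have "z \<bullet> (R0 *v z) > 0" "z \<bullet> z > 0" using pR0 unfolding posdef_def by auto
      then show False using zz nupos[of j] by (smt (verit) mult_pos_pos)
    qed
    then show ?thesis unfolding z_def by simp
  qed
  have "(X ** Q) $ i $ j = (X *v column j Q) $ i" for X :: "real^'n^'n" and i j
    by (simp add: matrix_matrix_mult_def matrix_vector_mult_def column_def)
  then have "R ** Q = R0 ** Q"
    by (simp add: vec_eq_iff col col0)
  then have "R ** (Q ** transpose Q) = R0 ** (Q ** transpose Q)" by (simp add: matrix_mul_assoc)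
  then show ?thesis using oQ unfolding orthogonal_matrix_def by simp
qed


lemma posdef_sqrt_exists:
  fixes S :: "real^'n^'n"
  assumes pS: "posdef S"
  shows "\<exists>R. posdef R \<and> R ** R = S"
proof -
  obtain Q mu where oQ: "orthogonal_matrix Q" and SQ: "S = Q ** diag_mat mu ** transpose Q"
    using symmetric_matrix_diagonalization pS unfolding posdef_def by blast
  have mupos: "mu i > 0" for i using posdef_diagonalization_pos[OF pS oQ SQ] .
  define R where "R = Q ** diag_mat (\<lambda>i. sqrt (mu i)) ** transpose Q"
  have "posdef R" unfolding R_def by (rule posdef_conj_diag_mat[OF oQ]) (simp add: mupos)
  moreover have "R ** R = S"
  proof -
    have "R ** R = Q ** diag_mat (\<lambda>i. sqrt (mu i)) ** (transpose Q ** Q) **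
        diag_mat (\<lambda>i. sqrt (mu i)) ** transpose Q"
      unfolding R_def by (simp add: matrix_mul_assoc)
    also have "\<dots> = Q ** diag_mat mu ** transpose Q"
      using oQ mupos unfolding orthogonal_matrix_def
      by (simp add: diag_mat_mult_diag_mat matrix_mul_assoc[symmetric] less_imp_le)
    finally show ?thesis using SQ by simp
  qed
  ultimately show ?thesis by blast
qed

lemma posdef_spd_sqrt:
  fixes S :: "real^'n^'n"
  assumes "posdef S"
  shows "posdef (spd_sqrt S)" "spd_sqrt S ** spd_sqrt S = S"
proof -
  obtain R where R: "posdef R" "R ** R = S" using posdef_sqrt_exists[OF assms] by blast
  have "posdef (spd_sqrt S) \<and> spd_sqrt S ** spd_sqrt S = S"
    unfolding spd_sqrt_def
    by (rule theI[of _ R]) (use R posdef_sqrt_unique in auto)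
  then show "posdef (spd_sqrt S)" "spd_sqrt S ** spd_sqrt S = S" by auto
qed

section \<open>Linear changes of variables for the Lebesgue integral on \<open>real^'n\<close>\<close>

lemma inj_axis_1: "inj (\<lambda>i::'n::finite. axis i (1::real))"
  by (auto simp: inj_def axis_eq_axis)

lemma Basis_vec_eq_range_axis: "(Basis :: (real^'n) set) = range (\<lambda>i. axis i 1)"
  by (auto simp: Basis_vec_def)

lemma prod_Basis_vec: "(\<Prod>b\<in>(Basis :: (real^'n) set). f b) = (\<Prod>i\<in>UNIV. f (axis i 1))"
  unfolding Basis_vec_eq_range_axis by (subst prod.reindex[OF inj_axis_1]) simp

lemma sum_Basis_vec: "(\<Sum>b\<in>(Basis :: (real^'n) set). f b) = (\<Sum>i\<in>UNIV. f (axis i 1))"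
  unfolding Basis_vec_eq_range_axis by (subst sum.reindex[OF inj_axis_1]) simp

lemma emeasure_lborel_box_vec:
  fixes l u :: "real^'n"
  assumes "\<And>i. l $ i \<le> u $ i"
  shows "emeasure lborel (box l u) = (\<Prod>i\<in>UNIV. ennreal (u $ i - l $ i))"
proof -
  have "emeasure lborel (box l u) = ennreal (\<Prod>b\<in>Basis. (u - l) \<bullet> b)"
    using assms by (subst emeasure_lborel_box) (auto simp: Basis_vec_def inner_axis)
  also have "\<dots> = ennreal (\<Prod>i\<in>UNIV. u $ i - l $ i)"
    by (simp add: prod_Basis_vec inner_axis)
  finally show ?thesis
    using assms by (simp add: prod_ennreal)
qed

lemma lborel_eqI_vec:
  fixes M :: "(real^'n) measure"
  assumes "\<And>l u. (\<And>i. l $ i \<le> u $ i) \<Longrightarrow> emeasure M (box l u) = (\<Prod>i\<in>UNIV. ennreal (u $ i - l $ i))"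
    and "sets M = sets borel"
  shows "lborel = M"
proof (rule lborel_eqI)
  fix l u :: "real^'n" assume le: "\<And>b. b \<in> Basis \<Longrightarrow> l \<bullet> b \<le> u \<bullet> b"
  have le': "l $ i \<le> u $ i" for i
    using le[of "axis i 1"] by (auto simp: Basis_vec_def inner_axis)
  have "emeasure M (box l u) = emeasure lborel (box l u)"
    using assms(1)[OF le'] emeasure_lborel_box_vec[OF le'] by simp
  then show "emeasure M (box l u) = (\<Prod>b\<in>Basis. (u - l) \<bullet> b)"
    using le by (simp add: emeasure_lborel_box)
qed (fact assms(2))

lemma matrix_vector_mult_borel_measurable [measurable]:
  "(\<lambda>x. (A::real^'n^'m) *v x) \<in> borel_measurable borel"
  by (intro borel_measurable_continuous_onI linear_continuous_on)
     (simp add: linear_linear matrix_vector_mul_linear)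

lemma matrix_vector_mult_nth_borel_measurable [measurable]:
  "(\<lambda>x. ((M::real^'n^'m) *v x) $ i) \<in> borel_measurable borel"
  using measurable_compose[OF matrix_vector_mult_borel_measurable[of M] borel_measurable_nth[of i]]
  by (simp add: o_def)

lemma distr_lborel_orthogonal_wellorder:
  fixes Q :: "real^('m::{finite,wellorder})^('m::{finite,wellorder})"
  assumes oQ: "orthogonal_matrix Q"
  shows "distr lborel borel (\<lambda>x. Q *v x) = lborel"
proof (rule lborel_eqI_vec[symmetric])
  fix l u :: "real^('m::{finite,wellorder})" assume le: "\<And>i. l $ i \<le> u $ i"
  have QQ: "transpose Q ** Q = mat 1" "Q ** transpose Q = mat 1"
    using oQ unfolding orthogonal_matrix_def by auto
  have pre: "(\<lambda>x. Q *v x) -` box l u = (\<lambda>x. transpose Q *v x) ` box l u"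
  proof (intro set_eqI iffI)
    fix x assume "x \<in> (\<lambda>x. Q *v x) -` box l u"
    moreover have "x = transpose Q *v (Q *v x)" using matrix_vector_mul_cancel[OF QQ(1)] by simp
    ultimately show "x \<in> (\<lambda>x. transpose Q *v x) ` box l u" by blast
  next
    fix x assume "x \<in> (\<lambda>x. transpose Q *v x) ` box l u"
    then show "x \<in> (\<lambda>x. Q *v x) -` box l u"
      using matrix_vector_mul_cancel[OF QQ(2)] by auto
  qed
  have ot: "orthogonal_transformation (\<lambda>x. transpose Q *v x)"
    unfolding orthogonal_transformation_matrix
    by (simp add: matrix_vector_mul_linear matrix_of_matrix_vector_mul oQ orthogonal_matrix_transpose)
  have "(\<lambda>x. Q *v x) -` box l u \<in> sets borel"
    using measurable_sets_borel[OF matrix_vector_mult_borel_measurable[of Q]] by simp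
  then have "emeasure (distr lborel borel (\<lambda>x. Q *v x)) (box l u) =
      emeasure lebesgue ((\<lambda>x. Q *v x) -` box l u)"
    by (subst emeasure_distr) auto
  also have "\<dots> = emeasure lebesgue ((\<lambda>x. transpose Q *v x) ` box l u)"
    unfolding pre ..
  also have "\<dots> = ennreal (measure lebesgue ((\<lambda>x. transpose Q *v x) ` box l u))"
    by (rule emeasure_eq_measure2) (rule measurable_orthogonal_image[OF ot lmeasurable_box])
  also have "\<dots> = emeasure lebesgue (box l u)"
    by (simp only: measure_orthogonal_image[OF ot lmeasurable_box] emeasure_eq_measure2[OF lmeasurable_box])
  finally show "emeasure (distr lborel borel (\<lambda>x. Q *v x)) (box l u) = (\<Prod>i\<in>UNIV. ennreal (u $ i - l $ i))"
    using emeasure_lborel_box_vec[OF le] by simp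
qed simp

text \<open>The orthogonal invariance of Lebesgue measure in \<open>Change_Of_Vars\<close> needs a well-ordered
  index type; a finite type is transported to such a copy of itself by relabelling coordinates.\<close>

typedef 'a ordered_copy = "UNIV :: 'a set" by simp

lemma range_Abs_ordered_copy: "range Abs_ordered_copy = UNIV"
  by (metis Rep_ordered_copy_inverse UNIV_I image_eqI subsetI subset_antisym)

lemma inj_Abs_ordered_copy: "inj Abs_ordered_copy"
  by (metis Abs_ordered_copy_inverse UNIV_I injI)

instance ordered_copy :: (finite) finite
proof
  have "finite (range (Abs_ordered_copy :: 'a \<Rightarrow> 'a ordered_copy))" by simp
  then show "finite (UNIV :: 'a ordered_copy set)" by (simp add: range_Abs_ordered_copy)
qed

instantiation ordered_copy :: (finite) linorder
begin
definition less_eq_ordered_copy :: "'a ordered_copy \<Rightarrow> 'a ordered_copy \<Rightarrow> bool" where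
  "less_eq_ordered_copy x y \<longleftrightarrow> to_nat (Rep_ordered_copy x) \<le> to_nat (Rep_ordered_copy y)"
definition less_ordered_copy :: "'a ordered_copy \<Rightarrow> 'a ordered_copy \<Rightarrow> bool" where
  "less_ordered_copy x y \<longleftrightarrow> to_nat (Rep_ordered_copy x) < to_nat (Rep_ordered_copy y)"
instance
proof
  fix x y z :: "'a ordered_copy"
  show "(x < y) = (x \<le> y \<and> \<not> y \<le> x)" unfolding less_eq_ordered_copy_def less_ordered_copy_def by auto
  show "x \<le> x" unfolding less_eq_ordered_copy_def by simp
  show "x \<le> y \<Longrightarrow> y \<le> z \<Longrightarrow> x \<le> z" unfolding less_eq_ordered_copy_def by simp
  show "x \<le> y \<Longrightarrow> y \<le> x \<Longrightarrow> x = y" unfolding less_eq_ordered_copy_def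
    by (metis Rep_ordered_copy_inject antisym to_nat_split)
  show "x \<le> y \<or> y \<le> x" unfolding less_eq_ordered_copy_def by auto
qed
end

instance ordered_copy :: (finite) wellorder
proof
  fix P :: "'a ordered_copy \<Rightarrow> bool" and a
  assume H: "\<And>x. (\<And>y. y < x \<Longrightarrow> P y) \<Longrightarrow> P x"
  show "P a"
  proof (induction a rule: measure_induct_rule[of "\<lambda>x. to_nat (Rep_ordered_copy x)"])
    case (less x) then show ?case using H unfolding less_ordered_copy_def by blast
  qed
qed

definition to_ordered_copy :: "real^'n \<Rightarrow> real^('n ordered_copy)" where
  "to_ordered_copy x = (\<chi> j. x $ Rep_ordered_copy j)"

definition from_ordered_copy :: "real^('n ordered_copy) \<Rightarrow> real^'n" where
  "from_ordered_copy y = (\<chi> i. y $ Abs_ordered_copy i)"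

lemma from_to_ordered_copy [simp]: "from_ordered_copy (to_ordered_copy x) = x"
  by (simp add: to_ordered_copy_def from_ordered_copy_def Abs_ordered_copy_inverse vec_eq_iff)

lemma sum_ordered_copy: "(\<Sum>j\<in>UNIV. g j) = (\<Sum>i\<in>UNIV. g (Abs_ordered_copy i))"
  by (metis range_Abs_ordered_copy sum.reindex[OF inj_Abs_ordered_copy] comp_apply sum.cong)

lemma prod_ordered_copy: "(\<Prod>j\<in>UNIV. g j) = (\<Prod>i\<in>UNIV. g (Abs_ordered_copy i))"
  by (metis range_Abs_ordered_copy prod.reindex[OF inj_Abs_ordered_copy] comp_apply prod.cong)

lemma to_ordered_copy_measurable [measurable]: "to_ordered_copy \<in> borel_measurable borel"
proof -
  have "linear to_ordered_copy" by (rule linearI) (auto simp: to_ordered_copy_def vec_eq_iff)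
  then show ?thesis
    by (intro borel_measurable_continuous_onI linear_continuous_on) (simp add: linear_conv_bounded_linear)
qed

lemma from_ordered_copy_measurable [measurable]: "from_ordered_copy \<in> borel_measurable borel"
proof -
  have "linear from_ordered_copy" by (rule linearI) (auto simp: from_ordered_copy_def vec_eq_iff)
  then show ?thesis
    by (intro borel_measurable_continuous_onI linear_continuous_on) (simp add: linear_conv_bounded_linear)
qed

lemma distr_lborel_to_ordered_copy: "distr (lborel :: (real^'n) measure) borel to_ordered_copy = lborel"
proof (rule lborel_eqI_vec[symmetric])
  fix l u :: "real^('n ordered_copy)" assume le: "\<And>i. l $ i \<le> u $ i"
  have pre: "to_ordered_copy -` box l u = box (from_ordered_copy l) (from_ordered_copy u)"
    by (auto simp: mem_box_cart to_ordered_copy_def from_ordered_copy_def Rep_ordered_copy_inverse)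
       (metis Abs_ordered_copy_cases Abs_ordered_copy_inverse UNIV_I)+
  have "emeasure (distr lborel borel to_ordered_copy) (box l u) = emeasure lborel (to_ordered_copy -` box l u)"
    by (subst emeasure_distr) auto
  also have "\<dots> = (\<Prod>i\<in>UNIV. ennreal (from_ordered_copy u $ i - from_ordered_copy l $ i))"
    unfolding pre using le by (intro emeasure_lborel_box_vec) (simp add: from_ordered_copy_def)
  also have "\<dots> = (\<Prod>i\<in>UNIV. ennreal (u $ i - l $ i))"
    by (simp add: prod_ordered_copy from_ordered_copy_def)
  finally show "emeasure (distr lborel borel to_ordered_copy) (box l u) = (\<Prod>i\<in>UNIV. ennreal (u $ i - l $ i))" .
qed simp

lemma nn_integral_to_ordered_copy:
  assumes [measurable]: "f \<in> borel_measurable borel"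
  shows "(\<integral>\<^sup>+y. f y \<partial>lborel) = (\<integral>\<^sup>+x. f (to_ordered_copy (x::real^'n)) \<partial>lborel)"
  by (subst distr_lborel_to_ordered_copy[symmetric]) (simp add: nn_integral_distr)

lemma nn_integral_orthogonal_change:
  fixes Q :: "real^'n^'n"
  assumes oQ: "orthogonal_matrix Q" and [measurable]: "f \<in> borel_measurable borel"
  shows "(\<integral>\<^sup>+x. f (Q *v x) \<partial>lborel) = (\<integral>\<^sup>+x. f x \<partial>lborel)"
proof -
  define Q' :: "real^('n ordered_copy)^('n ordered_copy)"
    where "Q' = (\<chi> a b. Q $ Rep_ordered_copy a $ Rep_ordered_copy b)"
  have comm: "to_ordered_copy (Q *v x) = Q' *v to_ordered_copy x" for x
    by (simp add: vec_eq_iff to_ordered_copy_def Q'_def matrix_vector_mult_def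
        sum_ordered_copy Abs_ordered_copy_inverse)
  have oQ': "orthogonal_matrix Q'"
  proof -
    have QtQ: "transpose Q ** Q = mat 1" using oQ unfolding orthogonal_matrix_def by simp
    have "(transpose Q' ** Q') $ a $ b = (transpose Q ** Q) $ Rep_ordered_copy a $ Rep_ordered_copy b" for a b
      by (simp add: Q'_def matrix_matrix_mult_def transpose_def sum_ordered_copy Abs_ordered_copy_inverse)
    then show ?thesis unfolding orthogonal_matrix QtQ
      by (simp add: vec_eq_iff mat_def Rep_ordered_copy_inject)
  qed
  have "(\<integral>\<^sup>+x. f (Q *v x) \<partial>lborel) = (\<integral>\<^sup>+x. f (from_ordered_copy (Q' *v to_ordered_copy x)) \<partial>lborel)"
    by (simp add: comm[symmetric])
  also have "\<dots> = (\<integral>\<^sup>+y. f (from_ordered_copy (Q' *v y)) \<partial>lborel)"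
    by (rule nn_integral_to_ordered_copy[symmetric]) measurable
  also have "\<dots> = (\<integral>\<^sup>+y. f (from_ordered_copy y) \<partial>(distr lborel borel (\<lambda>x. Q' *v x)))"
    by (subst nn_integral_distr) auto
  also have "\<dots> = (\<integral>\<^sup>+x. f (from_ordered_copy (to_ordered_copy x)) \<partial>lborel)"
    unfolding distr_lborel_orthogonal_wellorder[OF oQ']
    by (rule nn_integral_to_ordered_copy) measurable
  finally show ?thesis by simp
qed


lemma nn_integral_coordinate_stretch:
  fixes m :: "'n::finite \<Rightarrow> real"
  assumes m: "\<And>i. m i \<noteq> 0" and [measurable]: "f \<in> borel_measurable borel"
  shows "(\<integral>\<^sup>+x. f x \<partial>lborel) =
    ennreal \<bar>prod m UNIV\<bar> * (\<integral>\<^sup>+x. f (diag_mat m *v x :: real^'n) \<partial>lborel)"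
proof -
  define c where "c b = (\<Sum>i\<in>UNIV. m i * (b :: real^'n) $ i)" for b
  have cax: "c (axis j 1) = m j" for j
    by (simp add: c_def axis_def if_distrib[of "\<lambda>x. _ * x"] cong: if_cong)
  have c0: "\<And>j. j \<in> Basis \<Longrightarrow> c j \<noteq> 0" using m by (auto simp: Basis_vec_def cax)
  have T: "(\<Sum>j\<in>Basis. (c j * (x \<bullet> j)) *\<^sub>R j) = diag_mat m *v x" for x
  proof -
    have "(\<Sum>j\<in>Basis. (c j * (x \<bullet> j)) *\<^sub>R j) = (\<Sum>i\<in>UNIV. (m i * x $ i) *\<^sub>R axis i (1::real))"
      by (simp add: sum_Basis_vec cax inner_axis)
    then show ?thesis
      by (simp add: diag_mat_mult_vec vec_eq_iff sum_component axis_def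
          if_distrib[of "\<lambda>x. _ * x"] cong: if_cong)
  qed
  have P: "(\<Prod>j\<in>Basis. \<bar>c j\<bar>) = \<bar>prod m UNIV\<bar>"
    by (simp add: prod_Basis_vec cax abs_prod)
  have L: "lborel = density (distr lborel borel (\<lambda>x::real^'n. diag_mat m *v x)) (\<lambda>_. ennreal \<bar>prod m UNIV\<bar>)"
    using lborel_affine_euclidean[of c 0, OF c0] unfolding T P by simp
  show ?thesis
    by (subst L) (simp add: nn_integral_density nn_integral_distr nn_integral_cmult)
qed

lemma nn_integral_linear_change:
  fixes Q1 Q2 :: "real^'n^'n"
  assumes o1: "orthogonal_matrix Q1" and o2: "orthogonal_matrix Q2" and m: "\<And>i. m i > 0"
    and [measurable]: "f \<in> borel_measurable borel"
  shows "(\<integral>\<^sup>+x. f x \<partial>lborel) =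
    ennreal \<bar>det (Q1 ** diag_mat m ** Q2)\<bar> * (\<integral>\<^sup>+u. f ((Q1 ** diag_mat m ** Q2) *v u) \<partial>lborel)"
proof -
  have "\<bar>det Q1\<bar> = 1" "\<bar>det Q2\<bar> = 1"
    using det_orthogonal_matrix o1 o2 by fastforce+
  then have "\<bar>det (Q1 ** diag_mat m ** Q2)\<bar> = \<bar>prod m UNIV\<bar>"
    by (simp add: det_mul det_diag_mat abs_mult)
  moreover have "(\<integral>\<^sup>+u. f ((Q1 ** diag_mat m ** Q2) *v u) \<partial>lborel) =
      (\<integral>\<^sup>+v. f (Q1 *v (diag_mat m *v v)) \<partial>lborel)"
    unfolding matrix_vector_mul_assoc[symmetric]
    by (rule nn_integral_orthogonal_change[OF o2, of "\<lambda>v. f (Q1 *v (diag_mat m *v v))"]) measurable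
  moreover have "(\<integral>\<^sup>+x. f x \<partial>lborel) = (\<integral>\<^sup>+w. f (Q1 *v w) \<partial>lborel)"
    by (rule nn_integral_orthogonal_change[OF o1, symmetric]) measurable
  moreover have "\<dots> = ennreal \<bar>prod m UNIV\<bar> * (\<integral>\<^sup>+v. f (Q1 *v (diag_mat m *v v)) \<partial>lborel)"
    using m by (intro nn_integral_coordinate_stretch) (simp_all add: less_imp_neq[symmetric])
  ultimately show ?thesis by simp
qed

lemma nn_integral_prod_coordinates:
  fixes h :: "'n::finite \<Rightarrow> real \<Rightarrow> real"
  assumes [measurable]: "\<And>i. h i \<in> borel_measurable borel" and nn: "\<And>i t. 0 \<le> h i t"
  shows "(\<integral>\<^sup>+x. ennreal (\<Prod>i\<in>UNIV. h i ((x::real^'n) $ i)) \<partial>lborel) =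
    (\<Prod>i\<in>UNIV. \<integral>\<^sup>+t. ennreal (h i t) \<partial>lborel)"
proof -
  define ix where "ix = inv (\<lambda>i::'n. axis i (1::real))"
  have ixa: "ix (axis i 1) = i" for i unfolding ix_def by (rule inv_f_f[OF inj_axis_1])
  define f where "f b t = ennreal (h (ix b) t)" for b t
  have "(\<integral>\<^sup>+x. (\<Prod>b\<in>Basis. f b (x \<bullet> b)) \<partial>lborel) = (\<Prod>b\<in>(Basis::(real^'n) set). (\<integral>\<^sup>+x. f b x \<partial>lborel))"
    by (rule nn_integral_lborel_prod) (auto simp: f_def nn)
  moreover have "(\<Prod>b\<in>Basis. f b ((x::real^'n) \<bullet> b)) = ennreal (\<Prod>i\<in>UNIV. h i (x $ i))" for x
    by (simp add: prod_Basis_vec f_def ixa inner_axis prod_ennreal nn)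
  ultimately show ?thesis by (simp add: prod_Basis_vec f_def ixa)
qed

section \<open>Gaussian integrals\<close>

lemma normal_density_sqrt:
  "s > 0 \<Longrightarrow> normal_density m (sqrt s) x = exp (- (x - m)\<^sup>2 / (2 * s)) / sqrt (2 * pi * s)"
  by (simp add: normal_density_def)

lemma nn_integral_normal_density:
  "\<sigma> > 0 \<Longrightarrow> (\<integral>\<^sup>+x. ennreal (normal_density m \<sigma> x) \<partial>lborel) = 1"
  by (subst nn_integral_eq_integral) (auto intro: integrable_normal_density simp: integral_normal_density)

lemma nn_integral_gaussian:
  assumes a: "a > 0" and K: "K \<ge> 0"
  shows "(\<integral>\<^sup>+x. ennreal (K * exp (- (a * (x - c)\<^sup>2))) \<partial>lborel) = ennreal (K * sqrt (pi / a))"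
proof -
  define s where "s = 1 / (2 * a)"
  have s: "s > 0" using a by (simp add: s_def)
  have pt: "K * exp (- (a * (x - c)\<^sup>2)) = K * sqrt (pi / a) * normal_density c (sqrt s) x" for x
  proof -
    have "sqrt (pi / a) / sqrt (2 * pi * s) = 1"
      using a by (simp add: s_def real_sqrt_divide real_sqrt_mult field_simps)
    moreover have "- (x - c)\<^sup>2 / (2 * s) = - (a * (x - c)\<^sup>2)" using a by (simp add: s_def field_simps)
    ultimately show ?thesis using s a by (simp add: normal_density_sqrt)
  qed
  have "(\<integral>\<^sup>+x. ennreal (K * exp (- (a * (x - c)\<^sup>2))) \<partial>lborel) =
      (\<integral>\<^sup>+x. ennreal (K * sqrt (pi / a)) * ennreal (normal_density c (sqrt s) x) \<partial>lborel)"
    unfolding pt using K a by (intro nn_integral_cong ennreal_mult) auto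
  also have "\<dots> = ennreal (K * sqrt (pi / a)) * (\<integral>\<^sup>+x. ennreal (normal_density c (sqrt s) x) \<partial>lborel)"
    by (rule nn_integral_cmult) measurable
  finally show ?thesis using s by (simp add: nn_integral_normal_density)
qed


lemma normal_density_convolution:
  assumes g: "g > 0" and sg: "sg > 0"
  shows "(\<integral>\<^sup>+u. ennreal (normal_density m (sqrt g) u * normal_density (l * u) (sqrt sg) w) \<partial>lborel)
       = ennreal (normal_density (l * m) (sqrt (l\<^sup>2 * g + sg)) w)"
proof -
  define D where "D = l\<^sup>2 * g + sg"
  have D: "D > 0" using g sg by (simp add: D_def add_nonneg_pos)
  define A where "A = D / (2 * g * sg)"
  have A: "A > 0" using D g sg by (simp add: A_def)
  define c where "c = (m * sg + l * w * g) / D"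
  define K where "K = exp (- (w - l * m)\<^sup>2 / (2 * D)) / (sqrt (2 * pi * g) * sqrt (2 * pi * sg))"
  have K: "K \<ge> 0" unfolding K_def using g sg by simp
  have ex: "- (u - m)\<^sup>2 / (2 * g) + - (w - l * u)\<^sup>2 / (2 * sg) = - (A * (u - c)\<^sup>2) + - (w - l * m)\<^sup>2 / (2 * D)" for u
  proof -
    define gi where "gi = inverse g"
    define si where "si = inverse sg"
    define di where "di = inverse D"
    have "g * gi = 1" "sg * si = 1" "D * di = 1" using g sg D by (simp_all add: gi_def si_def di_def)
    moreover have "D = l\<^sup>2 * g + sg" by (simp add: D_def)
    ultimately show ?thesis
      unfolding A_def c_def divide_inverse inverse_mult_distrib gi_def[symmetric] si_def[symmetric]
        di_def[symmetric]
      by algebra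
  qed
  have pt: "normal_density m (sqrt g) u * normal_density (l * u) (sqrt sg) w = K * exp (- (A * (u - c)\<^sup>2))" for u
  proof -
    have "normal_density m (sqrt g) u * normal_density (l * u) (sqrt sg) w =
      exp (- (u - m)\<^sup>2 / (2 * g)) * exp (- (w - l * u)\<^sup>2 / (2 * sg)) / (sqrt (2 * pi * g) * sqrt (2 * pi * sg))"
      using g sg by (simp add: normal_density_sqrt)
    also have "\<dots> = exp (- (u - m)\<^sup>2 / (2 * g) + - (w - l * u)\<^sup>2 / (2 * sg)) / (sqrt (2 * pi * g) * sqrt (2 * pi * sg))"
      by (simp only: exp_add)
    also have "\<dots> = K * exp (- (A * (u - c)\<^sup>2))"
      unfolding ex K_def by (simp only: exp_add) simp
    finally show ?thesis .
  qed
  have "sqrt (pi / A) / (sqrt (2 * pi * g) * sqrt (2 * pi * sg)) = 1 / sqrt (2 * pi * D)"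
    using g sg D unfolding A_def
    by (simp add: real_sqrt_divide real_sqrt_mult field_simps)
  then have "K * sqrt (pi / A) = exp (- (w - l * m)\<^sup>2 / (2 * D)) * (1 / sqrt (2 * pi * D))"
    unfolding K_def by (metis times_divide_eq_left times_divide_eq_right)
  then have "K * sqrt (pi / A) = normal_density (l * m) (sqrt D) w"
    using D by (simp add: normal_density_sqrt)
  then show ?thesis
    unfolding pt D_def[symmetric] by (simp add: nn_integral_gaussian[OF A K])
qed

lemma nn_integral_normal_density_square_div:
  assumes s: "s > 0" "s < 2"
  shows "(\<integral>\<^sup>+w. ennreal ((normal_density a (sqrt s) w)\<^sup>2 / normal_density 0 1 w) \<partial>lborel)
       = ennreal (exp (a\<^sup>2 / (2 - s)) / sqrt (s * (2 - s)))"
proof -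
  define A where "A = (2 - s) / (2 * s)"
  have A: "A > 0" using s by (simp add: A_def)
  define c where "c = 2 * a / (2 - s)"
  define K where "K = exp (a\<^sup>2 / (2 - s)) * sqrt (2 * pi) / (2 * pi * s)"
  have K: "K \<ge> 0" using s by (simp add: K_def)
  have ex: "2 * (- (w - a)\<^sup>2 / (2 * s)) - (- w\<^sup>2 / 2) = - (A * (w - c)\<^sup>2) + a\<^sup>2 / (2 - s)" for w
  proof -
    define q where "q = inverse s"
    define r where "r = inverse (2 - s)"
    have "s * q = 1" "(2 - s) * r = 1" using s by (simp_all add: q_def r_def)
    then show ?thesis
      unfolding A_def c_def divide_inverse inverse_mult_distrib q_def[symmetric] r_def[symmetric]
      by algebra
  qed
  have pt: "(normal_density a (sqrt s) w)\<^sup>2 / normal_density 0 1 w = K * exp (- (A * (w - c)\<^sup>2))" for w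
  proof -
    have "(exp (- (w - a)\<^sup>2 / (2 * s)))\<^sup>2 / exp (- w\<^sup>2 / 2) = exp (- (A * (w - c)\<^sup>2)) * exp (a\<^sup>2 / (2 - s))"
    proof -
      have "(exp (- (w - a)\<^sup>2 / (2 * s)))\<^sup>2 / exp (- w\<^sup>2 / 2) = exp (2 * (- (w - a)\<^sup>2 / (2 * s)) - (- w\<^sup>2 / 2))"
        by (simp only: exp_diff power2_eq_square mult_2 exp_add)
      then show ?thesis unfolding ex by (simp only: exp_add)
    qed
    moreover have "(sqrt (2 * pi * s))\<^sup>2 = 2 * pi * s" using s by simp
    moreover have "(normal_density a (sqrt s) w)\<^sup>2 / normal_density 0 1 w
       = (exp (- (w - a)\<^sup>2 / (2 * s)))\<^sup>2 / exp (- w\<^sup>2 / 2) * (sqrt (2 * pi) / (sqrt (2 * pi * s))\<^sup>2)"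
      using s by (simp add: normal_density_sqrt[OF s(1)] std_normal_density_def field_simps power2_eq_square)
    ultimately show ?thesis unfolding K_def by (simp add: field_simps)
  qed
  have "sqrt (2 * pi) / (2 * pi * s) * sqrt (pi / A) = 1 / sqrt (s * (2 - s))"
  proof -
    have "pi / A = 2 * pi * s / (2 - s)" using s by (simp add: A_def field_simps)
    then have e: "sqrt (pi / A) = sqrt (2 * pi) * sqrt s / sqrt (2 - s)"
      by (simp add: real_sqrt_divide real_sqrt_mult)
    have e4: "2 * pi * s = sqrt (2 * pi) * sqrt (2 * pi) * (sqrt s * sqrt s)" using s by simp
    have aux: "P / (P * P * (q * q)) * (P * q / t) = 1 / (q * t)" if "P > 0" "q > 0" "t > 0"
      for P q t :: real
      using that by (simp add: field_simps)
    have "sqrt (2 * pi) / (2 * pi * s) * sqrt (pi / A) = 1 / (sqrt s * sqrt (2 - s))"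
      unfolding e by (subst e4) (rule aux, use s in auto)
    then show ?thesis by (simp add: real_sqrt_mult)
  qed
  moreover have "K * sqrt (pi / A) = exp (a\<^sup>2 / (2 - s)) * (sqrt (2 * pi) / (2 * pi * s) * sqrt (pi / A))"
    unfolding K_def by (simp add: field_simps)
  ultimately have "K * sqrt (pi / A) = exp (a\<^sup>2 / (2 - s)) / sqrt (s * (2 - s))"
    by simp
  then show ?thesis
    unfolding pt by (simp add: nn_integral_gaussian[OF A K])
qed

lemma real_sqrt_prod: "sqrt (prod f A) = prod (\<lambda>i. sqrt (f i)) A"
  by (induction A rule: infinite_finite_induct) (auto simp: real_sqrt_mult)

lemma prod_chi_square_factors:
  fixes lam z :: "'n::finite \<Rightarrow> real"
  shows "(\<Prod>i\<in>UNIV. exp ((lam i ^ l * z i)\<^sup>2 / (2 - (1 - lam i ^ (2 * l))))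
            / sqrt ((1 - lam i ^ (2 * l)) * (2 - (1 - lam i ^ (2 * l))))) =
    exp (\<Sum>i\<in>UNIV. (z i)\<^sup>2 * lam i ^ (2 * l) / (1 + lam i ^ (2 * l)))
      / sqrt (\<Prod>i\<in>UNIV. 1 - lam i ^ (4 * l))"
proof -
  have e1: "(lam i ^ l * z i)\<^sup>2 / (2 - (1 - lam i ^ (2 * l))) = (z i)\<^sup>2 * lam i ^ (2 * l) / (1 + lam i ^ (2 * l))" for i
    by (simp add: power_mult_distrib power_mult[symmetric] mult.commute)
  have e2: "(1 - lam i ^ (2 * l)) * (2 - (1 - lam i ^ (2 * l))) = 1 - lam i ^ (4 * l)" for i
    using power_add[of "lam i" "2 * l" "2 * l"] by (simp add: algebra_simps)
  show ?thesis
    unfolding e1 e2 by (simp add: prod_dividef exp_sum real_sqrt_prod)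
qed

lemma gauss_density_conj_diag_mat:
  fixes T Ti :: "real^'n^'n"
  assumes TTi: "T ** Ti = mat 1" and TiT: "Ti ** T = mat 1" and d: "\<And>i. d i > 0"
  shows "gauss_density (T ** diag_mat d ** transpose T) (T *v \<mu>) y =
         (\<Prod>i\<in>UNIV. normal_density (\<mu> $ i) (sqrt (d i)) ((Ti *v y) $ i)) / \<bar>det T\<bar>"
proof -
  let ?M = "T ** diag_mat d ** transpose T"
  let ?Mi = "transpose Ti ** diag_mat (\<lambda>i. 1 / d i) ** Ti"
  have TtTit: "transpose T ** transpose Ti = mat 1"
    by (metis TiT matrix_transpose_mul transpose_mat)
  have dd: "diag_mat d ** diag_mat (\<lambda>i. 1 / d i) = mat 1"
    using d by (simp add: diag_mat_mult_diag_mat diag_mat_1[symmetric] less_imp_neq[symmetric])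
  have "?M ** ?Mi = T ** (diag_mat d ** (transpose T ** transpose Ti) ** diag_mat (\<lambda>i. 1 / d i)) ** Ti"
    by (simp add: matrix_mul_assoc)
  also have "\<dots> = mat 1" by (simp add: TtTit dd TTi)
  finally have Mi: "matrix_inv ?M = ?Mi" by (rule matrix_inv_eqI)
  define w where "w = Ti *v y"
  define v where "v = w - \<mu>"
  have ymu: "y - T *v \<mu> = T *v v"
    unfolding v_def w_def by (simp add: matrix_vector_mult_diff_distrib matrix_vector_mul_cancel[OF TTi])
  have "(T *v v) \<bullet> (?Mi *v (T *v v)) =
      (T *v v) \<bullet> (transpose Ti *v (diag_mat (\<lambda>i. 1 / d i) *v (Ti *v (T *v v))))"
    by (simp add: matrix_vector_mul_assoc matrix_mul_assoc)
  also have "\<dots> = (Ti *v (T *v v)) \<bullet> (diag_mat (\<lambda>i. 1 / d i) *v v)"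
    by (subst inner_matrix_vector_transpose) (simp only: transpose_transpose matrix_vector_mul_cancel[OF TiT])
  also have "\<dots> = (\<Sum>i\<in>UNIV. (v $ i)\<^sup>2 / d i)"
    by (simp add: matrix_vector_mul_cancel[OF TiT] inner_diag_mat)
  finally have quad: "(y - T *v \<mu>) \<bullet> (matrix_inv ?M *v (y - T *v \<mu>)) = (\<Sum>i\<in>UNIV. (v $ i)\<^sup>2 / d i)"
    unfolding ymu Mi .
  have "(2 * pi) ^ CARD('n) * det ?M = (det T)\<^sup>2 * (\<Prod>i\<in>UNIV. 2 * pi * d i)"
    by (simp add: det_mul det_diag_mat power2_eq_square prod.distrib prod_constant)
  then have sq: "sqrt ((2 * pi) ^ CARD('n) * det ?M) = \<bar>det T\<bar> * (\<Prod>i\<in>UNIV. sqrt (2 * pi * d i))"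
    by (simp add: real_sqrt_mult real_sqrt_prod)
  have ex: "exp (-(1/2) * (\<Sum>i\<in>UNIV. (v $ i)\<^sup>2 / d i)) = (\<Prod>i\<in>UNIV. exp (- (v $ i)\<^sup>2 / (2 * d i)))"
    by (simp add: exp_sum[symmetric] sum_distrib_left)
  have nd: "(\<Prod>i\<in>UNIV. normal_density (\<mu> $ i) (sqrt (d i)) (w $ i)) =
        (\<Prod>i\<in>UNIV. exp (- (v $ i)\<^sup>2 / (2 * d i))) / (\<Prod>i\<in>UNIV. sqrt (2 * pi * d i))"
    using d by (simp add: normal_density_sqrt v_def prod_dividef)
  show ?thesis unfolding gauss_density_def quad sq ex nd w_def[symmetric] by simp
qed

lemma nn_integral_chi_square:
  assumes [measurable]: "K \<in> borel_measurable M" "p \<in> borel_measurable M"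
    and K: "\<And>y. 0 \<le> K y" and p: "\<And>y. 0 < p y"
    and IK: "(\<integral>\<^sup>+y. K y \<partial>M) = 1" and Ip: "(\<integral>\<^sup>+y. p y \<partial>M) = 1"
    and IKp: "(\<integral>\<^sup>+y. ennreal ((K y)\<^sup>2 / p y) \<partial>M) = ennreal E" and E: "0 \<le> E"
  shows "(\<integral>\<^sup>+y. ennreal ((K y - p y)\<^sup>2 / p y) \<partial>M) = ennreal (E - 1)"
proof -
  let ?X = "\<integral>\<^sup>+y. ennreal ((K y - p y)\<^sup>2 / p y) \<partial>M"
  have pw: "ennreal ((K y - p y)\<^sup>2 / p y) + ennreal (2 * K y) = ennreal ((K y)\<^sup>2 / p y) + ennreal (p y)" for y
  proof -
    have "(K y - p y)\<^sup>2 / p y + 2 * K y = (K y)\<^sup>2 / p y + p y"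
      using p[of y] by (simp add: field_simps power2_eq_square)
    then show ?thesis
      using p[of y] K[of y] by (simp flip: ennreal_plus)
  qed
  have "?X + 2 = ?X + (\<integral>\<^sup>+y. ennreal (2 * K y) \<partial>M)"
    using K IK by (simp add: ennreal_mult nn_integral_cmult)
  also have "\<dots> = (\<integral>\<^sup>+y. ennreal ((K y - p y)\<^sup>2 / p y) + ennreal (2 * K y) \<partial>M)"
    by (rule nn_integral_add[symmetric]) measurable
  also have "\<dots> = (\<integral>\<^sup>+y. ennreal ((K y)\<^sup>2 / p y) + ennreal (p y) \<partial>M)"
    by (simp add: pw)
  also have "\<dots> = (\<integral>\<^sup>+y. ennreal ((K y)\<^sup>2 / p y) \<partial>M) + (\<integral>\<^sup>+y. ennreal (p y) \<partial>M)"
    by (rule nn_integral_add) measurable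
  also have "\<dots> = ennreal (E + 1)"
    using E by (simp add: IKp Ip ennreal_plus)
  finally have eq: "?X + 2 = ennreal (E + 1)" .
  then obtain c where c: "c \<ge> 0" "?X = ennreal c"
    by (cases ?X) auto
  then have "ennreal (c + 2) = ennreal (E + 1)"
    using eq by (metis ennreal_numeral ennreal_plus zero_le_numeral)
  then have "c + 2 = E + 1"
    using c E by (subst (asm) ennreal_inj) auto
  then show ?thesis using c by simp
qed


section \<open>The autoregressive chain in diagonalising coordinates\<close>

lemma matrix_mul_diff_left: "(A::real^'n^'m) ** (B - C) = A ** B - A ** (C::real^'k^'n)"
  by (simp add: matrix_matrix_mult_def vec_eq_iff algebra_simps sum_subtractf)

lemma matrix_mul_diff_right: "((B::real^'n^'m) - C) ** (A::real^'k^'n) = B ** A - C ** A"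
  by (simp add: matrix_matrix_mult_def vec_eq_iff algebra_simps sum_subtractf)

lemma conj_diag_mat_innovation:
  fixes T Ti A S :: "real^'n^'n"
  assumes TiT: "Ti ** T = mat 1" and A: "A = T ** diag_mat lam ** Ti"
    and S: "S = T ** diag_mat (\<lambda>_. 1) ** transpose T"
  shows "S - A ** S ** transpose A = T ** diag_mat (\<lambda>i. 1 - (lam i)\<^sup>2) ** transpose T"
proof -
  have "transpose T ** transpose Ti = mat 1"
    by (metis TiT matrix_transpose_mul transpose_mat)
  moreover have "A ** S ** transpose A =
      T ** diag_mat lam ** (Ti ** T) ** (transpose T ** transpose Ti) ** diag_mat lam ** transpose T"
    unfolding A S by (simp add: matrix_transpose_mul diag_mat_1 matrix_mul_assoc)
  ultimately have "A ** S ** transpose A = T ** diag_mat (\<lambda>i. (lam i)\<^sup>2) ** transpose T"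
    by (simp add: TiT diag_mat_mult_diag_mat[symmetric] power2_eq_square matrix_mul_assoc)
  moreover have "diag_mat (\<lambda>i. 1 - (lam i)\<^sup>2) = diag_mat (\<lambda>_. 1) - diag_mat (\<lambda>i. (lam i)\<^sup>2)"
    by (simp add: diag_mat_def vec_eq_iff)
  ultimately show ?thesis
    using S by (simp add: matrix_mul_diff_left matrix_mul_diff_right)
qed

locale gaussian_ar_chain =
  fixes A S P :: "real^'n^'n" and lam :: "'n \<Rightarrow> real"
  assumes posdef_S: "posdef S"
    and posdef_V: "posdef (S - A ** S ** transpose A)"
    and orthogonal_P: "orthogonal_matrix P"
    and conj_A: "matrix_inv (spd_sqrt S) ** A ** spd_sqrt S = P ** diag_mat lam ** transpose P"
begin

definition V :: "real^'n^'n" where "V = S - A ** S ** transpose A"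

text \<open>The coordinates \<open>z = B\<^sup>-\<^sup>1 x = P\<^sup>T \<Sigma>\<^sup>-\<^sup>1\<^sup>/\<^sup>2 x\<close> of the statement, in which \<open>A\<close>, \<open>\<Sigma>\<close> and
  \<open>V\<close> all become diagonal.\<close>
definition B :: "real^'n^'n" where "B = spd_sqrt S ** P"
definition B_inv :: "real^'n^'n" where "B_inv = transpose P ** matrix_inv (spd_sqrt S)"

lemma PtP: "transpose P ** P = mat 1" and PPt: "P ** transpose P = mat 1"
  using orthogonal_P unfolding orthogonal_matrix_def by auto

lemma B_B_inv: "B ** B_inv = mat 1"
proof -
  have "B ** B_inv = spd_sqrt S ** (P ** transpose P) ** matrix_inv (spd_sqrt S)"
    unfolding B_def B_inv_def by (simp add: matrix_mul_assoc)
  then show ?thesis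
    by (simp add: PPt posdef_matrix_inv posdef_spd_sqrt posdef_S)
qed

lemma B_inv_B: "B_inv ** B = mat 1"
proof -
  have "B_inv ** B = transpose P ** (matrix_inv (spd_sqrt S) ** spd_sqrt S) ** P"
    unfolding B_def B_inv_def by (simp add: matrix_mul_assoc)
  then show ?thesis
    by (simp add: PtP posdef_matrix_inv posdef_spd_sqrt posdef_S)
qed

lemma transpose_B_transpose_B_inv: "transpose B ** transpose B_inv = mat 1"
  by (metis B_inv_B matrix_transpose_mul transpose_mat)

lemma det_B_nonzero: "det B \<noteq> 0"
  using B_B_inv det_mul[of B B_inv] by auto

lemma S_eq: "S = B ** diag_mat (\<lambda>_. 1) ** transpose B"
proof -
  have "transpose (spd_sqrt S) = spd_sqrt S"
    using posdef_spd_sqrt(1)[OF posdef_S] unfolding posdef_def by simp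
  then have "B ** transpose B = spd_sqrt S ** (P ** transpose P) ** spd_sqrt S"
    unfolding B_def by (simp add: matrix_transpose_mul matrix_mul_assoc)
  then show ?thesis
    by (simp add: PPt diag_mat_1 posdef_spd_sqrt posdef_S)
qed

lemma A_eq: "A = B ** diag_mat lam ** B_inv"
proof -
  let ?R = "spd_sqrt S"
  have "A = (?R ** matrix_inv ?R) ** A ** (?R ** matrix_inv ?R)"
    by (simp add: posdef_matrix_inv posdef_spd_sqrt posdef_S)
  also have "\<dots> = ?R ** (matrix_inv ?R ** A ** ?R) ** matrix_inv ?R"
    by (simp add: matrix_mul_assoc)
  also have "\<dots> = B ** diag_mat lam ** B_inv"
    unfolding conj_A B_def B_inv_def by (simp add: matrix_mul_assoc)
  finally show ?thesis .
qed

lemma V_eq: "V = B ** diag_mat (\<lambda>i. 1 - (lam i)\<^sup>2) ** transpose B"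
  unfolding V_def by (rule conj_diag_mat_innovation[OF B_inv_B A_eq S_eq])

lemma eigenvalue_square_less_1: "(lam i)\<^sup>2 < 1"
proof -
  define y where "y = transpose B_inv *v axis i 1"
  have ty: "transpose B *v y = axis i 1"
    unfolding y_def by (simp only: matrix_vector_mul_cancel[OF transpose_B_transpose_B_inv])
  then have "y \<noteq> 0" by (auto simp: axis_eq_0_iff)
  then have "0 < y \<bullet> (V *v y)" using posdef_V unfolding posdef_def V_def by blast
  then show ?thesis
    unfolding V_eq inner_conj_matrix ty inner_diag_mat_axis by simp
qed

lemma eigenvalue_even_power_less_1: "0 < k \<Longrightarrow> lam i ^ (2 * k) < 1"
  using eigenvalue_square_less_1[of i] by (simp add: power_mult power_less_one_iff)

lemma nn_integral_B_inv:
  assumes [measurable]: "g \<in> borel_measurable borel"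
  shows "(\<integral>\<^sup>+z. g (B_inv *v z) \<partial>lborel) = ennreal \<bar>det B\<bar> * (\<integral>\<^sup>+u. g u \<partial>lborel)"
proof -
  obtain Q nu where oQ: "orthogonal_matrix Q" and R: "spd_sqrt S = Q ** diag_mat nu ** transpose Q"
    using symmetric_matrix_diagonalization posdef_spd_sqrt(1)[OF posdef_S] unfolding posdef_def by blast
  have "nu i > 0" for i using posdef_diagonalization_pos[OF posdef_spd_sqrt(1)[OF posdef_S] oQ R] .
  moreover have "orthogonal_matrix (transpose Q ** P)"
    by (intro orthogonal_matrix_mul orthogonal_P) (simp add: orthogonal_matrix_transpose oQ)
  moreover have "B = Q ** diag_mat nu ** (transpose Q ** P)"
    unfolding B_def R by (simp add: matrix_mul_assoc)
  ultimately have "(\<integral>\<^sup>+z. f z \<partial>lborel) = ennreal \<bar>det B\<bar> * (\<integral>\<^sup>+u. f (B *v u) \<partial>lborel)"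
    if [measurable]: "f \<in> borel_measurable borel" for f
    using nn_integral_linear_change[OF oQ] by simp
  from this[of "\<lambda>z. g (B_inv *v z)"] show ?thesis
    by (simp add: matrix_vector_mul_cancel[OF B_inv_B])
qed

lemma nn_integral_prod_B_inv:
  fixes h :: "'n \<Rightarrow> real \<Rightarrow> real"
  assumes [measurable]: "\<And>i. h i \<in> borel_measurable borel" and hn: "\<And>i t. 0 \<le> h i t" and c: "c \<ge> 0"
  shows "(\<integral>\<^sup>+z. ennreal (c * (\<Prod>i\<in>UNIV. h i ((B_inv *v z) $ i))) \<partial>lborel)
       = ennreal (\<bar>det B\<bar> * c) * (\<Prod>i\<in>UNIV. \<integral>\<^sup>+t. ennreal (h i t) \<partial>lborel)"
proof -
  have "(\<integral>\<^sup>+z. ennreal (c * (\<Prod>i\<in>UNIV. h i ((B_inv *v z) $ i))) \<partial>lborel)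
      = ennreal \<bar>det B\<bar> * (\<integral>\<^sup>+u. ennreal c * ennreal (\<Prod>i\<in>UNIV. h i (u $ i)) \<partial>lborel)"
    using c hn by (subst nn_integral_B_inv) (auto simp: ennreal_mult prod_nonneg)
  also have "\<dots> = ennreal \<bar>det B\<bar> * (ennreal c * (\<Prod>i\<in>UNIV. \<integral>\<^sup>+t. ennreal (h i t) \<partial>lborel))"
    by (simp add: nn_integral_cmult nn_integral_prod_coordinates hn)
  finally show ?thesis using c by (simp add: ennreal_mult mult.assoc)
qed


text \<open>The \<open>l\<close>-step density in the diagonalising coordinates: each coordinate is an independent
  scalar AR(1) chain started at \<open>z\<^sub>i\<close>, hence \<open>N(\<lambda>\<^sub>i\<^sup>l z\<^sub>i, 1 - \<lambda>\<^sub>i\<^sup>2\<^sup>l)\<close>.\<close>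
definition trans_dens_diag :: "nat \<Rightarrow> real^'n \<Rightarrow> real^'n \<Rightarrow> real" where
  "trans_dens_diag l x y =
     (\<Prod>i\<in>UNIV. normal_density (lam i ^ l * (B_inv *v x) $ i) (sqrt (1 - lam i ^ (2 * l)))
        ((B_inv *v y) $ i)) / \<bar>det B\<bar>"

lemma gauss_density_step: "gauss_density V (A *v x) y = trans_dens_diag 1 x y"
proof -
  have "A *v x = B *v (\<chi> i. lam i * (B_inv *v x) $ i)"
    by (subst A_eq) (simp add: matrix_vector_mul_assoc[symmetric] diag_mat_mult_vec)
  moreover have "1 - (lam i)\<^sup>2 > 0" for i using eigenvalue_square_less_1[of i] by simp
  ultimately show ?thesis
    unfolding V_eq trans_dens_diag_def
    by (simp add: gauss_density_conj_diag_mat[OF B_B_inv B_inv_B] power2_eq_square)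
qed

lemma trans_dens_Suc_eq: "trans_dens A V (Suc l) x y = trans_dens_diag (Suc l) x y"
proof (induction l arbitrary: y)
  case 0
  show ?case using gauss_density_step by simp
next
  case (Suc l)
  define d where "d = \<bar>det B\<bar>"
  have d: "d > 0" using det_B_nonzero by (simp add: d_def)
  define a where "a i = lam i ^ Suc l * (B_inv *v x) $ i" for i
  define s where "s i = 1 - lam i ^ (2 * Suc l)" for i
  define sg where "sg i = 1 - (lam i)\<^sup>2" for i
  define w where "w = B_inv *v y"
  have s: "s i > 0" for i using eigenvalue_even_power_less_1[of "Suc l" i] by (simp add: s_def)
  have sg: "sg i > 0" for i using eigenvalue_square_less_1[of i] by (simp add: sg_def)
  define h where "h i t = normal_density (a i) (sqrt (s i)) t * normal_density (lam i * t) (sqrt (sg i)) (w $ i)"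
    for i t
  have [measurable]: "h i \<in> borel_measurable borel" for i
    unfolding h_def normal_density_def by measurable
  have hn: "0 \<le> h i t" for i t unfolding h_def by simp
  have "trans_dens_diag (Suc l) x z * trans_dens_diag 1 z y = (1 / d\<^sup>2) * (\<Prod>i\<in>UNIV. h i ((B_inv *v z) $ i))" for z
    unfolding trans_dens_diag_def h_def a_def s_def sg_def w_def d_def
    by (simp add: prod.distrib[symmetric] power2_eq_square field_simps)
  then have "trans_dens A V (Suc (Suc l)) x y = (LINT z|lborel. (1 / d\<^sup>2) * (\<Prod>i\<in>UNIV. h i ((B_inv *v z) $ i)))"
    by (simp add: Suc.IH gauss_density_step)
  also have "\<dots> = enn2real (\<integral>\<^sup>+z. ennreal ((1 / d\<^sup>2) * (\<Prod>i\<in>UNIV. h i ((B_inv *v z) $ i))) \<partial>lborel)"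
    by (rule integral_eq_nn_integral) (measurable, intro AE_I2, simp add: hn prod_nonneg)
  also have "(\<integral>\<^sup>+z. ennreal ((1 / d\<^sup>2) * (\<Prod>i\<in>UNIV. h i ((B_inv *v z) $ i))) \<partial>lborel)
      = ennreal (d * (1 / d\<^sup>2)) * (\<Prod>i\<in>UNIV. \<integral>\<^sup>+t. ennreal (h i t) \<partial>lborel)"
    unfolding d_def by (rule nn_integral_prod_B_inv[OF _ hn]) simp_all
  also have "(\<Prod>i\<in>UNIV. \<integral>\<^sup>+t. ennreal (h i t) \<partial>lborel)
      = ennreal (\<Prod>i\<in>UNIV. normal_density (lam i * a i) (sqrt ((lam i)\<^sup>2 * s i + sg i)) (w $ i))"
    unfolding h_def by (simp add: normal_density_convolution s sg prod_ennreal)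
  finally have "trans_dens A V (Suc (Suc l)) x y =
      d * (1 / d\<^sup>2) * (\<Prod>i\<in>UNIV. normal_density (lam i * a i) (sqrt ((lam i)\<^sup>2 * s i + sg i)) (w $ i))"
    using d by (simp add: ennreal_mult[symmetric] prod_nonneg)
  also have "d * (1 / d\<^sup>2) * (\<Prod>i\<in>UNIV. normal_density (lam i * a i) (sqrt ((lam i)\<^sup>2 * s i + sg i)) (w $ i)) =
      trans_dens_diag (Suc (Suc l)) x y"
  proof -
    have var: "(lam i)\<^sup>2 * s i + sg i = 1 - lam i ^ (2 * Suc (Suc l))" for i
      by (simp add: s_def sg_def power2_eq_square algebra_simps)
    show ?thesis
      unfolding var trans_dens_diag_def a_def w_def d_def[symmetric]
      using d by (simp add: power2_eq_square field_simps)
  qed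
  finally show ?case .
qed

lemma stationary_density_eq:
  "gauss_density S 0 y = (\<Prod>i\<in>UNIV. normal_density 0 1 ((B_inv *v y) $ i)) / \<bar>det B\<bar>"
  using gauss_density_conj_diag_mat[OF B_B_inv B_inv_B, of "\<lambda>_. 1" 0 y]
  by (simp flip: S_eq)


lemma trans_dens_eq: "l \<ge> 1 \<Longrightarrow> trans_dens A V l x y = trans_dens_diag l x y"
  using trans_dens_Suc_eq[of "l - 1"] by simp

lemma variance_bounds:
  assumes "l \<ge> 1" shows "0 < 1 - lam i ^ (2 * l)" "1 - lam i ^ (2 * l) < 2"
proof -
  have "0 \<le> lam i ^ (2 * l)" by (simp add: power_mult)
  moreover have "lam i ^ (2 * l) < 1" using assms by (intro eigenvalue_even_power_less_1) simp
  ultimately show "0 < 1 - lam i ^ (2 * l)" "1 - lam i ^ (2 * l) < 2" by linarith+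
qed

lemma trans_dens_measurable:
  assumes "l \<ge> 1" shows "trans_dens A V l x \<in> borel_measurable borel"
proof -
  have eq: "trans_dens A V l x = trans_dens_diag l x" using assms by (simp add: fun_eq_iff trans_dens_eq)
  show ?thesis unfolding eq trans_dens_diag_def[abs_def] by measurable
qed

lemma stationary_density_measurable: "gauss_density S 0 \<in> borel_measurable borel"
  unfolding stationary_density_eq[abs_def] by measurable

lemma trans_dens_nonneg: "l \<ge> 1 \<Longrightarrow> 0 \<le> trans_dens A V l x y"
  by (simp add: trans_dens_eq trans_dens_diag_def prod_nonneg)

lemma stationary_density_pos: "0 < gauss_density S 0 y"
  using det_B_nonzero by (simp add: stationary_density_eq prod_pos normal_density_pos)

lemma nn_integral_trans_dens:
  assumes "l \<ge> 1" shows "(\<integral>\<^sup>+y. trans_dens A V l x y \<partial>lborel) = 1"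
proof -
  define f where "f i t = normal_density (lam i ^ l * (B_inv *v x) $ i) (sqrt (1 - lam i ^ (2 * l))) t"
    for i t
  have "(\<integral>\<^sup>+y. trans_dens A V l x y \<partial>lborel) =
      (\<integral>\<^sup>+y. ennreal (1 / \<bar>det B\<bar> * (\<Prod>i\<in>UNIV. f i ((B_inv *v y) $ i))) \<partial>lborel)"
    using assms by (simp add: trans_dens_eq trans_dens_diag_def f_def)
  also have "\<dots> = ennreal (\<bar>det B\<bar> * (1 / \<bar>det B\<bar>)) * (\<Prod>i\<in>UNIV. \<integral>\<^sup>+t. f i t \<partial>lborel)"
    by (rule nn_integral_prod_B_inv) (simp_all add: f_def)
  also have "\<dots> = 1"
    using det_B_nonzero variance_bounds[OF assms] by (simp add: f_def nn_integral_normal_density)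
  finally show ?thesis .
qed

lemma nn_integral_stationary_density: "(\<integral>\<^sup>+y. gauss_density S 0 y \<partial>lborel) = 1"
proof -
  have "(\<integral>\<^sup>+y. gauss_density S 0 y \<partial>lborel) =
      (\<integral>\<^sup>+y. ennreal (1 / \<bar>det B\<bar> * (\<Prod>i\<in>UNIV. normal_density 0 1 ((B_inv *v y) $ i))) \<partial>lborel)"
    by (simp add: stationary_density_eq)
  also have "\<dots> = ennreal (\<bar>det B\<bar> * (1 / \<bar>det B\<bar>)) * (\<Prod>i\<in>(UNIV::'n set). \<integral>\<^sup>+t. normal_density 0 1 t \<partial>lborel)"
    by (rule nn_integral_prod_B_inv[where h = "\<lambda>_. normal_density 0 1"]) simp_all
  also have "\<dots> = 1"
    using det_B_nonzero by (simp add: nn_integral_normal_density)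
  finally show ?thesis .
qed

lemma nn_integral_trans_dens_square_div:
  assumes "l \<ge> 1"
  shows "(\<integral>\<^sup>+y. ennreal ((trans_dens A V l x y)\<^sup>2 / gauss_density S 0 y) \<partial>lborel) =
    ennreal (exp (\<Sum>i\<in>UNIV. ((B_inv *v x) $ i)\<^sup>2 * lam i ^ (2*l) / (1 + lam i ^ (2*l)))
             / sqrt (\<Prod>i\<in>UNIV. 1 - lam i ^ (4*l)))"
proof -
  define d where "d = \<bar>det B\<bar>"
  have d: "d > 0" using det_B_nonzero by (simp add: d_def)
  define a where "a i = lam i ^ l * (B_inv *v x) $ i" for i
  define s where "s i = 1 - lam i ^ (2 * l)" for i
  have s: "s i > 0" "s i < 2" for i using variance_bounds[OF assms] by (simp_all add: s_def)
  define f where "f i t = normal_density (a i) (sqrt (s i)) t" for i t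
  define g where "g t = normal_density 0 1 t" for t :: real
  have g: "0 < g t" for t unfolding g_def by (simp add: normal_density_pos)
  have "(trans_dens A V l x y)\<^sup>2 / gauss_density S 0 y =
      (1 / d) * ((\<Prod>i\<in>UNIV. f i ((B_inv *v y) $ i))\<^sup>2 / (\<Prod>i\<in>UNIV. g ((B_inv *v y) $ i)))" for y
    using assms d
    by (simp add: trans_dens_eq trans_dens_diag_def stationary_density_eq f_def g_def a_def s_def
        d_def[symmetric] power2_eq_square field_simps)
  then have Kp: "(trans_dens A V l x y)\<^sup>2 / gauss_density S 0 y =
      (1 / d) * (\<Prod>i\<in>UNIV. (f i ((B_inv *v y) $ i))\<^sup>2 / g ((B_inv *v y) $ i))" for y
    by (simp add: prod_dividef prod_power_distrib)
  have [measurable]: "f i \<in> borel_measurable borel" for i unfolding f_def by measurable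
  have [measurable]: "g \<in> borel_measurable borel" unfolding g_def by measurable
  have "(\<integral>\<^sup>+y. ennreal ((trans_dens A V l x y)\<^sup>2 / gauss_density S 0 y) \<partial>lborel) =
      ennreal (d * (1 / d)) * (\<Prod>i\<in>UNIV. \<integral>\<^sup>+t. ennreal ((f i t)\<^sup>2 / g t) \<partial>lborel)"
    unfolding Kp d_def
    by (rule nn_integral_prod_B_inv) (measurable, auto intro!: divide_nonneg_pos g)
  also have "\<dots> = ennreal (\<Prod>i\<in>UNIV. exp ((a i)\<^sup>2 / (2 - s i)) / sqrt (s i * (2 - s i)))"
    unfolding f_def g_def using d s
    by (simp add: nn_integral_normal_density_square_div prod_ennreal less_imp_le)
  finally show ?thesis
    unfolding a_def s_def prod_chi_square_factors .
qed

lemma chi_sq_eq: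
  assumes "l \<ge> 1"
  shows "chi_sq A V S x l =
    ennreal (exp (\<Sum>i\<in>UNIV. ((B_inv *v x) $ i)\<^sup>2 * lam i ^ (2*l) / (1 + lam i ^ (2*l)))
             / sqrt (\<Prod>i\<in>UNIV. 1 - lam i ^ (4*l)) - 1)"
proof -
  have "0 < 1 - lam i ^ (4 * l)" for i
    using assms eigenvalue_even_power_less_1[of "2 * l" i] by (simp add: mult.assoc)
  then have "0 < (\<Prod>i\<in>UNIV. 1 - lam i ^ (4 * l))" by (simp add: prod_pos)
  then show ?thesis
    unfolding chi_sq_def
    by (intro nn_integral_chi_square trans_dens_measurable stationary_density_measurable
        trans_dens_nonneg stationary_density_pos nn_integral_trans_dens nn_integral_stationary_density
        nn_integral_trans_dens_square_div assms)
       (simp_all add: trans_dens_measurable[OF assms] stationary_density_measurable)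
qed

end

theorem proposition4p29:
  fixes A S P :: "real^'n^'n" and lam :: "'n \<Rightarrow> real" and x :: "real^'n" and l :: nat
  assumes "posdef S"
    and "posdef (S - A ** S ** transpose A)"
    and "A ** S = S ** transpose A"
    and "orthogonal_matrix P"
    and "matrix_inv (spd_sqrt S) ** A ** spd_sqrt S = P ** diag_mat lam ** transpose P"
    and "l \<ge> 1"
  shows "chi_sq A (S - A ** S ** transpose A) S x l =
    ennreal (exp (\<Sum>i\<in>UNIV. (((transpose P *v (matrix_inv (spd_sqrt S) *v x)) $ i)^2 * lam i ^ (2*l)
                               / (1 + lam i ^ (2*l))))
             / sqrt (\<Prod>i\<in>UNIV. 1 - lam i ^ (4*l)) - 1)"
proof -
  interpret gaussian_ar_chain A S P lam
    using assms(1,2,4,5) by unfold_locales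
  have "transpose P *v (matrix_inv (spd_sqrt S) *v x) = B_inv *v x"
    by (simp add: B_inv_def matrix_vector_mul_assoc)
  then show ?thesis
    using chi_sq_eq[OF assms(6)] by (simp add: V_def)
qed

end
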